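(* Let $L$ be a finite inf-semilattice with least element $\bot$ and let $\widetilde L:=\{(x,y)\in L^2: x\wedge y=\bot\}$ with the product order. Then for all $(z,t),(x,y)\in\widetilde L$ with $(z,t)\le(x,y)$, $$\mu_{\widetilde L}((z,t),(x,y))=\mu_L(z,x)\,\mu_L(t,y).$$ Consequently, if $f,g:\widetilde L\to\mathbb R$ satisfy $f(x,y)=\sum_{(x',y')\in\widetilde L,\,(x',y')\le(x,y)}g(x',y')$ for all $(x,y)\in\widetilde L$, then $g(x,y)=\sum_{(z,t)\in\widetilde L,\,(z,t)\le(x,y)}\mu_L(z,x)\mu_L(t,y)f(z,t)$ for all $(x,y)\in\widetilde L$.
   Context: For a finite poset $P$, the Möbius function $\mu_P$ is defined on pairs $a\le b$ by $\mu_P(a,a)=1$ and $\sum_{a\le c\le b}\mu_P(a,c)=0$ for $a<b$; it is characterized by: for real functions $f,g$ on $P$ (with $P$ having a least element), $g(x)=\sum_{y\le x}f(y)$ for all $x$ iff $f(x)=\sum_{y\le x}\mu_P(y,x)g(y)$ for all $x$. *)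

theory Defs
  imports Complex_Main
begin

definition mobius :: "'a set \<Rightarrow> ('a \<Rightarrow> 'a \<Rightarrow> bool) \<Rightarrow> 'a \<Rightarrow> 'a \<Rightarrow> real" where
  "mobius A le = (THE mu.
      (\<forall>a\<in>A. mu a a = 1) \<and>
      (\<forall>a\<in>A. \<forall>b\<in>A. le a b \<and> a \<noteq> b \<longrightarrow>
          (\<Sum>c\<in>{c\<in>A. le a c \<and> le c b}. mu a c) = 0) \<and>
      (\<forall>a b. \<not> (a \<in> A \<and> b \<in> A \<and> le a b) \<longrightarrow> mu a b = 0))"

definition disj_pairs :: "('a::{semilattice_inf, order_bot} \<times> 'a) set" where
  "disj_pairs = {(x, y). inf x y = bot}"

definition prod_le :: "('a::order \<times> 'a) \<Rightarrow> ('a \<times> 'a) \<Rightarrow> bool" where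
  "prod_le p q \<longleftrightarrow> fst p \<le> fst q \<and> snd p \<le> snd q"

end

theory Submission
  imports Defs
begin

(* The poset L~ = {(x,y). x \<sqinter> y = \<bottom>} is a down-set of the product
   poset L \<times> L: if (z,t) \<le> (x,y) then z \<sqinter> t \<le> x \<sqinter> y = \<bottom>.  Every interval [q,p] of
   L~ is therefore an interval of L \<times> L, and the theorem splits into two general facts
   about Moebius functions of finite posets:
     (1) the Moebius function of a down-set is the restriction of the ambient one;
     (2) the Moebius function of a product poset is the product of the factors' ones.
   Both are proved via uniqueness: a function satisfying the defining recursion is the
   Moebius function.  The inversion formula is then the general Moebius inversion
   theorem on L~, which rests on the "right" sum identity sum_{c in [a,b]} mu(c,b) = [a=b];
   that identity is obtained from the defining ("left") one by comparing with the
   Moebius function of the dual poset. *)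

section \<open>Finite posets given by a carrier and a relation\<close>

definition interval :: "'a set \<Rightarrow> ('a \<Rightarrow> 'a \<Rightarrow> bool) \<Rightarrow> 'a \<Rightarrow> 'a \<Rightarrow> 'a set" where
  "interval A le a b = {c\<in>A. le a c \<and> le c b}"

definition mobius_function :: "'a set \<Rightarrow> ('a \<Rightarrow> 'a \<Rightarrow> bool) \<Rightarrow> ('a \<Rightarrow> 'a \<Rightarrow> real) \<Rightarrow> bool" where
  "mobius_function A le mu \<longleftrightarrow> (\<forall>a\<in>A. mu a a = 1) \<and>
      (\<forall>a\<in>A. \<forall>b\<in>A. le a b \<and> a \<noteq> b \<longrightarrow> (\<Sum>c\<in>interval A le a b. mu a c) = 0) \<and>
      (\<forall>a b. \<not> (a \<in> A \<and> b \<in> A \<and> le a b) \<longrightarrow> mu a b = 0)"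

lemma mobius_def_alt: "mobius A le = (THE mu. mobius_function A le mu)"
  unfolding mobius_def mobius_function_def interval_def ..

text \<open>Bounded unfolding of the recursion mu(a,b) = - sum_{a \<le> c < b} mu(a,c); with enough
  fuel it yields a Moebius function, which proves existence.\<close>
fun mobius_fuel :: "nat \<Rightarrow> 'a set \<Rightarrow> ('a \<Rightarrow> 'a \<Rightarrow> bool) \<Rightarrow> 'a \<Rightarrow> 'a \<Rightarrow> real" where
  "mobius_fuel 0 A le a b = 0"
| "mobius_fuel (Suc n) A le a b =
     (if a \<in> A \<and> b \<in> A \<and> le a b then
        (if a = b then 1 else - (\<Sum>c\<in>interval A le a b - {b}. mobius_fuel n A le a c))
      else 0)"

locale finite_poset =
  fixes A :: "'a set" and le :: "'a \<Rightarrow> 'a \<Rightarrow> bool"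
  assumes finite_carrier: "finite A"
    and reflexive: "a \<in> A \<Longrightarrow> le a a"
    and antisymmetric: "a \<in> A \<Longrightarrow> b \<in> A \<Longrightarrow> le a b \<Longrightarrow> le b a \<Longrightarrow> a = b"
    and transitive: "a \<in> A \<Longrightarrow> b \<in> A \<Longrightarrow> c \<in> A \<Longrightarrow> le a b \<Longrightarrow> le b c \<Longrightarrow> le a c"
begin

lemma finite_interval: "finite (interval A le a b)"
  using finite_carrier unfolding interval_def by simp

lemma top_in_interval: "a \<in> A \<Longrightarrow> b \<in> A \<Longrightarrow> le a b \<Longrightarrow> b \<in> interval A le a b"
  unfolding interval_def using reflexive by simp

text \<open>Shrinking the upper end of an interval strictly decreases its size: the measure
  for all inductions over the recursion.\<close>
lemma card_interval_less:
  assumes "b \<in> A" "le a b" and c: "c \<in> interval A le a b - {b}"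
  shows "card (interval A le a c) < card (interval A le a b)"
proof (rule psubset_card_mono[OF finite_interval])
  have "c \<in> A" "le c b" "c \<noteq> b" using c unfolding interval_def by auto
  then have "interval A le a c \<subseteq> interval A le a b" "b \<notin> interval A le a c"
    using assms transitive antisymmetric unfolding interval_def by blast+
  moreover have "b \<in> interval A le a b" using assms reflexive unfolding interval_def by simp
  ultimately show "interval A le a c \<subset> interval A le a b" by blast
qed

lemma mobius_function_rec:
  assumes mu: "mobius_function A le mu" and "a \<in> A" "b \<in> A" "le a b" "a \<noteq> b"
  shows "mu a b = - (\<Sum>c\<in>interval A le a b - {b}. mu a c)"
proof -
  have "0 = (\<Sum>c\<in>interval A le a b. mu a c)" using mu assms unfolding mobius_function_def by auto
  also have "\<dots> = mu a b + (\<Sum>c\<in>interval A le a b - {b}. mu a c)"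
    using sum.remove[OF finite_interval top_in_interval] assms by simp
  finally show ?thesis by simp
qed

lemma mobius_function_unique:
  assumes m1: "mobius_function A le m1" and m2: "mobius_function A le m2"
  shows "m1 = m2"
proof (intro ext)
  fix a b
  show "m1 a b = m2 a b"
  proof (induction b rule: measure_induct_rule[where f = "\<lambda>b. card (interval A le a b)"])
    case (less b)
    consider "\<not> (a \<in> A \<and> b \<in> A \<and> le a b)" | "a \<in> A" "a = b"
      | "a \<in> A" "b \<in> A" "le a b" "a \<noteq> b" by blast
    then show ?case
    proof cases
      case 3
      have "(\<Sum>c\<in>interval A le a b - {b}. m1 a c) = (\<Sum>c\<in>interval A le a b - {b}. m2 a c)"
        using less card_interval_less[OF 3(2,3)] by (intro sum.cong) auto
      then show ?thesis using mobius_function_rec[OF m1 3] mobius_function_rec[OF m2 3] by simp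
    qed (use m1 m2 in \<open>auto simp: mobius_function_def\<close>)
  qed
qed

lemma mobius_fuel_stable:
  "card (interval A le a b) \<le> n \<Longrightarrow> n \<le> m \<Longrightarrow> mobius_fuel m A le a b = mobius_fuel n A le a b"
proof (induction n arbitrary: m b)
  case 0
  then have "interval A le a b = {}" using finite_interval by simp
  then have "\<not> (a \<in> A \<and> b \<in> A \<and> le a b)" using top_in_interval by blast
  then show ?case by (cases m) (simp_all only: mobius_fuel.simps if_False)
next
  case (Suc n)
  then obtain m' where m: "m = Suc m'" and "n \<le> m'" by (cases m) auto
  show ?case
  proof (cases "a \<in> A \<and> b \<in> A \<and> le a b \<and> a \<noteq> b")
    case True
    have "(\<Sum>c\<in>interval A le a b - {b}. mobius_fuel m' A le a c)
        = (\<Sum>c\<in>interval A le a b - {b}. mobius_fuel n A le a c)"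
    proof (rule sum.cong[OF refl])
      fix c assume c: "c \<in> interval A le a b - {b}"
      have "card (interval A le a c) \<le> n"
        using card_interval_less[OF _ _ c] True Suc.prems(1) by simp
      then show "mobius_fuel m' A le a c = mobius_fuel n A le a c" using Suc.IH \<open>n \<le> m'\<close> by blast
    qed
    then show ?thesis using True by (simp only: m mobius_fuel.simps)
  next
    case False
    then show ?thesis by (simp only: m mobius_fuel.simps) auto
  qed
qed

lemma mobius_function_exists: "mobius_function A le (mobius_fuel (Suc (card A)) A le)"
proof -
  let ?mu = "mobius_fuel (Suc (card A)) A le"
  have stable: "?mu a c = mobius_fuel (card A) A le a c" for a c
    by (rule mobius_fuel_stable)
       (auto intro: card_mono[OF finite_carrier] simp: interval_def)
  have "(\<Sum>c\<in>interval A le a b. ?mu a c) = 0"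
    if ab: "a \<in> A" "b \<in> A" "le a b" "a \<noteq> b" for a b
  proof -
    have "?mu a b = - (\<Sum>c\<in>interval A le a b - {b}. mobius_fuel (card A) A le a c)"
      using ab by (subst mobius_fuel.simps) simp
    also have "\<dots> = - (\<Sum>c\<in>interval A le a b - {b}. ?mu a c)"
      by (simp only: stable)
    finally have "?mu a b = - (\<Sum>c\<in>interval A le a b - {b}. ?mu a c)" .
    then show ?thesis
      using sum.remove[OF finite_interval top_in_interval[OF ab(1-3)], of "?mu a"] by simp
  qed
  moreover have "?mu a a = 1" if "a \<in> A" for a
    using that reflexive by (simp only: mobius_fuel.simps) simp
  moreover have "?mu a b = 0" if "\<not> (a \<in> A \<and> b \<in> A \<and> le a b)" for a b
    using that by (simp only: mobius_fuel.simps) simp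
  ultimately show ?thesis unfolding mobius_function_def by blast
qed

lemma mobius_function_mobius: "mobius_function A le (mobius A le)"
  unfolding mobius_def_alt
  by (rule theI[of _ "mobius_fuel (Suc (card A)) A le"])
     (use mobius_function_exists mobius_function_unique in blast)+

lemma mobius_eqI: "mobius_function A le mu \<Longrightarrow> mobius A le = mu"
  using mobius_function_unique[OF mobius_function_mobius] .

lemma mobius_refl: "a \<in> A \<Longrightarrow> mobius A le a a = 1"
  using mobius_function_mobius unfolding mobius_function_def by blast

lemma mobius_zero: "\<not> (a \<in> A \<and> b \<in> A \<and> le a b) \<Longrightarrow> mobius A le a b = 0"
  using mobius_function_mobius unfolding mobius_function_def by blast

lemma mobius_sum_left:
  assumes "a \<in> A" "b \<in> A" "le a b"
  shows "(\<Sum>c\<in>interval A le a b. mobius A le a c) = (if a = b then 1 else 0)"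
proof (cases "a = b")
  case True
  then have "interval A le a b = {a}" using assms antisymmetric reflexive unfolding interval_def by auto
  then show ?thesis using True assms mobius_refl by simp
qed (use mobius_function_mobius assms in \<open>auto simp: mobius_function_def\<close>)

lemma finite_poset_subset:
  assumes D: "D \<subseteq> A" shows "finite_poset D le"
proof
  show "finite D" by (rule finite_subset[OF D finite_carrier])
next
  fix a assume "a \<in> D"
  then show "le a a" using D by (intro reflexive) auto
next
  fix a b assume "a \<in> D" "b \<in> D" "le a b" "le b a"
  then show "a = b" using D by (intro antisymmetric) auto
next
  fix a b c assume "a \<in> D" "b \<in> D" "c \<in> D" "le a b" "le b c"
  then show "le a c" using D by (intro transitive[of a b c]) auto
qed

lemma finite_poset_dual: "finite_poset A (\<lambda>a b. le b a)"
  by unfold_locales (use finite_carrier reflexive antisymmetric transitive in blast)+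

text \<open>The Moebius function of the dual poset is the transpose: both arise as one-sided
  inverses of the zeta function, so they agree by associativity of the double sum
  sum_{a \<le> c \<le> d \<le> b} mu(a,c) mu*(b,d).\<close>
lemma mobius_dual: "mobius A le a b = mobius A (\<lambda>a b. le b a) b a"
proof -
  interpret dual: finite_poset A "\<lambda>a b. le b a" by (rule finite_poset_dual)
  let ?mu = "mobius A le" and ?nu = "mobius A (\<lambda>a b. le b a)"
  show ?thesis
  proof (cases "a \<in> A \<and> b \<in> A \<and> le a b")
    case False
    then show ?thesis using mobius_zero dual.mobius_zero by auto
  next
    case True
    then have ab: "a \<in> A" "b \<in> A" "le a b" by auto
    let ?I = "interval A le a b"
    have dual_sum: "(\<Sum>d\<in>interval A le c b. ?nu b d) = (if c = b then 1 else 0)"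
      if "c \<in> A" "le c b" for c
    proof -
      have "interval A (\<lambda>a b. le b a) b c = interval A le c b" unfolding interval_def by auto
      then show ?thesis using dual.mobius_sum_left[of b c] that ab by auto
    qed
    let ?S = "\<Sum>c\<in>?I. \<Sum>d\<in>{d\<in>?I. le c d}. ?mu a c * ?nu b d"
    have "?S = (\<Sum>c\<in>?I. ?mu a c * (\<Sum>d\<in>interval A le c b. ?nu b d))"
    proof (rule sum.cong[OF refl])
      fix c assume "c \<in> ?I"
      then have "{d\<in>?I. le c d} = interval A le c b" using ab transitive unfolding interval_def by blast
      then show "(\<Sum>d\<in>{d\<in>?I. le c d}. ?mu a c * ?nu b d) = ?mu a c * (\<Sum>d\<in>interval A le c b. ?nu b d)"
        by (simp add: sum_distrib_left)
    qed
    also have "\<dots> = (\<Sum>c\<in>?I. if c = b then ?mu a c else 0)"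
      using dual_sum by (intro sum.cong refl) (simp add: interval_def)
    also have "\<dots> = ?mu a b" using top_in_interval[OF ab] by (simp add: finite_interval)
    finally have S_mu: "?S = ?mu a b" .
    have "?S = (\<Sum>d\<in>?I. \<Sum>c\<in>{c\<in>?I. le c d}. ?mu a c * ?nu b d)"
      by (rule sum.swap_restrict[OF finite_interval finite_interval])
    also have "\<dots> = (\<Sum>d\<in>?I. ?nu b d * (\<Sum>c\<in>interval A le a d. ?mu a c))"
    proof (rule sum.cong[OF refl])
      fix d assume "d \<in> ?I"
      then have "{c\<in>?I. le c d} = interval A le a d" using ab transitive unfolding interval_def by blast
      then show "(\<Sum>c\<in>{c\<in>?I. le c d}. ?mu a c * ?nu b d) = ?nu b d * (\<Sum>c\<in>interval A le a d. ?mu a c)"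
        by (simp add: sum_distrib_left mult.commute)
    qed
    also have "\<dots> = (\<Sum>d\<in>?I. if d = a then ?nu b d else 0)"
      using mobius_sum_left[of a] ab by (intro sum.cong refl) (auto simp: interval_def)
    also have "\<dots> = ?nu b a"
      using ab reflexive by (simp add: finite_interval) (simp add: interval_def)
    finally show ?thesis using S_mu by simp
  qed
qed

lemma mobius_sum_right:
  assumes "a \<in> A" "b \<in> A" "le a b"
  shows "(\<Sum>c\<in>interval A le a b. mobius A le c b) = (if a = b then 1 else 0)"
proof -
  interpret dual: finite_poset A "\<lambda>a b. le b a" by (rule finite_poset_dual)
  have "(\<Sum>c\<in>interval A le a b. mobius A le c b)
      = (\<Sum>c\<in>interval A (\<lambda>a b. le b a) b a. mobius A (\<lambda>a b. le b a) b c)"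
    by (rule sum.cong) (auto simp: interval_def intro: mobius_dual)
  then show ?thesis using dual.mobius_sum_left[of b a] assms by auto
qed

theorem mobius_inversion:
  assumes f: "\<forall>p\<in>A. f p = (\<Sum>q\<in>{q\<in>A. le q p}. g q)" and p: "p \<in> A"
  shows "g p = (\<Sum>q\<in>{q\<in>A. le q p}. mobius A le q p * f q)"
proof -
  let ?D = "{q\<in>A. le q p}"
  have fin: "finite ?D" using finite_carrier by simp
  have "(\<Sum>q\<in>?D. mobius A le q p * f q) = (\<Sum>q\<in>?D. \<Sum>r\<in>{r\<in>?D. le r q}. mobius A le q p * g r)"
  proof (rule sum.cong[OF refl])
    fix q assume "q \<in> ?D"
    then have "{r\<in>A. le r q} = {r\<in>?D. le r q}" using p transitive by blast
    then show "mobius A le q p * f q = (\<Sum>r\<in>{r\<in>?D. le r q}. mobius A le q p * g r)"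
      using f \<open>q \<in> ?D\<close> by (simp add: sum_distrib_left)
  qed
  also have "\<dots> = (\<Sum>r\<in>?D. \<Sum>q\<in>{q\<in>?D. le r q}. mobius A le q p * g r)"
    by (rule sum.swap_restrict[OF fin fin])
  also have "\<dots> = (\<Sum>r\<in>?D. g r * (\<Sum>q\<in>interval A le r p. mobius A le q p))"
  proof (rule sum.cong[OF refl])
    fix r assume "r \<in> ?D"
    have "{q\<in>?D. le r q} = interval A le r p" unfolding interval_def by auto
    then show "(\<Sum>q\<in>{q\<in>?D. le r q}. mobius A le q p * g r) = g r * (\<Sum>q\<in>interval A le r p. mobius A le q p)"
      by (simp add: sum_distrib_left mult.commute)
  qed
  also have "\<dots> = (\<Sum>r\<in>?D. if r = p then g r else 0)"
    using mobius_sum_right p by (intro sum.cong) auto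
  also have "\<dots> = g p" using p reflexive fin by simp
  finally show ?thesis by simp
qed

end

section \<open>Down-sets and products\<close>

text \<open>Restricting to a down-set does not change the Moebius function, since every
  interval with upper end in the down-set lies inside it.\<close>
lemma mobius_downset:
  assumes P: "finite_poset A le" and "D \<subseteq> A"
    and down: "\<And>a b. b \<in> D \<Longrightarrow> a \<in> A \<Longrightarrow> le a b \<Longrightarrow> a \<in> D"
    and "a \<in> D" "b \<in> D"
  shows "mobius D le a b = mobius A le a b"
proof -
  interpret finite_poset A le by (rule P)
  interpret D: finite_poset D le by (rule finite_poset_subset[OF \<open>D \<subseteq> A\<close>])
  let ?nu = "\<lambda>a b. if a \<in> D \<and> b \<in> D then mobius A le a b else 0"
  have "(\<Sum>c\<in>interval D le a b. ?nu a c) = 0"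
    if ab: "a \<in> D" "b \<in> D" "le a b" "a \<noteq> b" for a b
  proof -
    have I: "interval D le a b = interval A le a b"
    proof
      show "interval D le a b \<subseteq> interval A le a b"
        using \<open>D \<subseteq> A\<close> unfolding interval_def by auto
      show "interval A le a b \<subseteq> interval D le a b"
        using down[OF ab(2)] unfolding interval_def by auto
    qed
    have "?nu a c = mobius A le a c" if "c \<in> interval D le a b" for c
      using that ab(1) by (simp add: interval_def)
    then have "(\<Sum>c\<in>interval D le a b. ?nu a c) = (\<Sum>c\<in>interval A le a b. mobius A le a c)"
      unfolding I[symmetric] by (rule sum.cong[OF refl])
    also have "\<dots> = 0"
      using mobius_sum_left[of a b] ab \<open>D \<subseteq> A\<close> by (simp add: subset_iff)
    finally show ?thesis .
  qed
  moreover have "?nu a b = 0" if "\<not> (a \<in> D \<and> b \<in> D \<and> le a b)" for a b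
    using that mobius_zero[of a b] by (cases "a \<in> D \<and> b \<in> D") simp_all
  moreover have "?nu a a = 1" if "a \<in> D" for a
    using that \<open>D \<subseteq> A\<close> mobius_refl[of a] by auto
  ultimately have "mobius_function D le ?nu" unfolding mobius_function_def by blast
  then show ?thesis using D.mobius_eqI assms by simp
qed

definition product_le :: "('a \<Rightarrow> 'a \<Rightarrow> bool) \<Rightarrow> ('b \<Rightarrow> 'b \<Rightarrow> bool) \<Rightarrow> 'a \<times> 'b \<Rightarrow> 'a \<times> 'b \<Rightarrow> bool" where
  "product_le le1 le2 p q \<longleftrightarrow> le1 (fst p) (fst q) \<and> le2 (snd p) (snd q)"

lemma finite_poset_product:
  assumes P1: "finite_poset A le1" and P2: "finite_poset B le2"
  shows "finite_poset (A \<times> B) (product_le le1 le2)"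
proof -
  interpret P1: finite_poset A le1 by (rule P1)
  interpret P2: finite_poset B le2 by (rule P2)
  show ?thesis
  proof
    show "finite (A \<times> B)" using P1.finite_carrier P2.finite_carrier by simp
  next
    fix p assume "p \<in> A \<times> B"
    then show "product_le le1 le2 p p"
      unfolding product_le_def using P1.reflexive P2.reflexive by (auto simp: mem_Times_iff)
  next
    fix p q assume "p \<in> A \<times> B" "q \<in> A \<times> B" "product_le le1 le2 p q" "product_le le1 le2 q p"
    then show "p = q"
      unfolding product_le_def using P1.antisymmetric P2.antisymmetric
      by (simp add: mem_Times_iff prod_eq_iff)
  next
    fix p q r assume "p \<in> A \<times> B" "q \<in> A \<times> B" "r \<in> A \<times> B"
      and "product_le le1 le2 p q" "product_le le1 le2 q r"
    then show "product_le le1 le2 p r"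
      unfolding product_le_def mem_Times_iff using P1.transitive P2.transitive by blast
  qed
qed

text \<open>The Moebius function of a product of posets is the product of the Moebius
  functions: intervals are products of intervals, so the defining sums factor.\<close>
lemma mobius_product:
  assumes P1: "finite_poset A le1" and P2: "finite_poset B le2"
  shows "mobius (A \<times> B) (product_le le1 le2) p q
           = mobius A le1 (fst p) (fst q) * mobius B le2 (snd p) (snd q)"
proof -
  interpret P1: finite_poset A le1 by (rule P1)
  interpret P2: finite_poset B le2 by (rule P2)
  interpret P: finite_poset "A \<times> B" "product_le le1 le2"
    by (rule finite_poset_product[OF P1 P2])
  let ?nu = "\<lambda>p q. mobius A le1 (fst p) (fst q) * mobius B le2 (snd p) (snd q)"
  have "(\<Sum>c\<in>interval (A \<times> B) (product_le le1 le2) p q. ?nu p c) = 0"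
    if pq: "p \<in> A \<times> B" "q \<in> A \<times> B" "product_le le1 le2 p q" "p \<noteq> q" for p q
  proof -
    have "interval (A \<times> B) (product_le le1 le2) p q
          = interval A le1 (fst p) (fst q) \<times> interval B le2 (snd p) (snd q)"
      unfolding interval_def product_le_def by auto
    then have "(\<Sum>c\<in>interval (A \<times> B) (product_le le1 le2) p q. ?nu p c)
        = (\<Sum>c\<in>interval A le1 (fst p) (fst q). mobius A le1 (fst p) c)
          * (\<Sum>d\<in>interval B le2 (snd p) (snd q). mobius B le2 (snd p) d)"
      by (simp add: sum_product sum.cartesian_product case_prod_beta)
    also have "\<dots> = (if fst p = fst q then 1 else 0) * (if snd p = snd q then 1 else 0)"
      using pq P1.mobius_sum_left P2.mobius_sum_left
      by (simp add: product_le_def mem_Times_iff)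
    also have "\<dots> = 0" using \<open>p \<noteq> q\<close> by (simp add: prod_eq_iff)
    finally show ?thesis .
  qed
  moreover have "?nu p q = 0" if "\<not> (p \<in> A \<times> B \<and> q \<in> A \<times> B \<and> product_le le1 le2 p q)" for p q
  proof -
    have "\<not> (fst p \<in> A \<and> fst q \<in> A \<and> le1 (fst p) (fst q))
          \<or> \<not> (snd p \<in> B \<and> snd q \<in> B \<and> le2 (snd p) (snd q))"
      using that unfolding product_le_def by (auto simp: mem_Times_iff)
    then show ?thesis using P1.mobius_zero P2.mobius_zero by auto
  qed
  moreover have "?nu p p = 1" if "p \<in> A \<times> B" for p
    using that P1.mobius_refl P2.mobius_refl by (auto simp: mem_Times_iff)
  ultimately have "mobius_function (A \<times> B) (product_le le1 le2) ?nu"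
    unfolding mobius_function_def by blast
  then show ?thesis using P.mobius_eqI by simp
qed

section \<open>The poset of disjoint pairs\<close>

lemma finite_poset_order: "finite_poset (UNIV :: 'a::{finite, order} set) (\<le>)"
  by unfold_locales auto

lemma prod_le_product_le: "prod_le = product_le (\<le>) (\<le>)"
  unfolding prod_le_def product_le_def by (intro ext) simp

lemma finite_poset_prod_le: "finite_poset (UNIV :: ('a::{finite, order} \<times> 'a) set) prod_le"
  using finite_poset_product[OF finite_poset_order finite_poset_order]
  by (simp add: prod_le_product_le)

lemma disj_pairs_downward_closed:
  fixes p q :: "'a::{semilattice_inf, order_bot} \<times> 'a"
  assumes "p \<in> disj_pairs" "prod_le q p"
  shows "q \<in> disj_pairs"
proof -
  have "inf (fst q) (snd q) \<le> inf (fst p) (snd p)"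
    using assms(2) unfolding prod_le_def by (intro inf_mono) auto
  also have "inf (fst p) (snd p) = bot" using assms(1) unfolding disj_pairs_def by auto
  finally show ?thesis unfolding disj_pairs_def by (auto simp: le_bot)
qed

lemma mobius_disj_pairs:
  fixes p q :: "'a::{finite, semilattice_inf, order_bot} \<times> 'a"
  assumes "q \<in> disj_pairs" "p \<in> disj_pairs"
  shows "mobius disj_pairs prod_le q p
           = mobius UNIV (\<le>) (fst q) (fst p) * mobius UNIV (\<le>) (snd q) (snd p)"
proof -
  have "mobius disj_pairs prod_le q p = mobius UNIV prod_le q p"
    using disj_pairs_downward_closed assms by (intro mobius_downset[OF finite_poset_prod_le]) auto
  also have "\<dots> = mobius UNIV (\<le>) (fst q) (fst p) * mobius UNIV (\<le>) (snd q) (snd p)"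
    using mobius_product[OF finite_poset_order finite_poset_order, of q p]
    by (simp add: prod_le_product_le)
  finally show ?thesis .
qed

theorem mainTheorem2:
  shows "(\<forall>z t x y. (z, t) \<in> (disj_pairs :: ('a::{finite, semilattice_inf, order_bot} \<times> 'a) set) \<and> (x, y) \<in> disj_pairs
              \<and> prod_le (z, t) (x, y) \<longrightarrow>
            mobius disj_pairs prod_le (z, t) (x, y)
              = mobius (UNIV :: 'a set) (\<le>) z x * mobius (UNIV :: 'a set) (\<le>) t y)
       \<and> (\<forall>(f :: 'a \<times> 'a \<Rightarrow> real) (g :: 'a \<times> 'a \<Rightarrow> real).
            (\<forall>p\<in>disj_pairs. f p = (\<Sum>q\<in>{q\<in>disj_pairs. prod_le q p}. g q)) \<longrightarrow>
            (\<forall>(x, y)\<in>disj_pairs. g (x, y) =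
               (\<Sum>(z, t)\<in>{q\<in>disj_pairs. prod_le q (x, y)}.
                  mobius UNIV (\<le>) z x * mobius UNIV (\<le>) t y * f (z, t))))"
proof (intro conjI allI impI ballI)
  show "mobius disj_pairs prod_le (z, t) (x, y) = mobius UNIV (\<le>) z x * mobius UNIV (\<le>) t y"
    if "(z, t) \<in> disj_pairs \<and> (x, y) \<in> disj_pairs \<and> prod_le (z, t) (x, y)" for z t x y :: 'a
    using mobius_disj_pairs that by fastforce
next
  fix f g :: "'a \<times> 'a \<Rightarrow> real" and p :: "'a \<times> 'a"
  assume f: "\<forall>p\<in>disj_pairs. f p = (\<Sum>q\<in>{q\<in>disj_pairs. prod_le q p}. g q)" and p: "p \<in> disj_pairs"
  interpret disj: finite_poset "disj_pairs :: ('a \<times> 'a) set" prod_le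
    by (rule finite_poset.finite_poset_subset[OF finite_poset_prod_le subset_UNIV])
  have "g p = (\<Sum>q\<in>{q\<in>disj_pairs. prod_le q p}. mobius disj_pairs prod_le q p * f q)"
    by (rule disj.mobius_inversion[OF f p])
  also have "\<dots> = (\<Sum>q\<in>{q\<in>disj_pairs. prod_le q p}.
                    mobius UNIV (\<le>) (fst q) (fst p) * mobius UNIV (\<le>) (snd q) (snd p) * f q)"
    using p by (intro sum.cong) (simp_all add: mobius_disj_pairs)
  finally show "case p of (x, y) \<Rightarrow> g (x, y) = (\<Sum>(z, t)\<in>{q\<in>disj_pairs. prod_le q (x, y)}.
                  mobius UNIV (\<le>) z x * mobius UNIV (\<le>) t y * f (z, t))"
    by (simp add: case_prod_beta split: prod.split)
qed

end
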